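(* Let $0<\alpha,\beta<1$, $a\in(0,1]$ and $N$ even. The spectral projections $F_{a,1,N}(w)$ and $F_{a,2,N}(w)$ of $\phi_{a,N}(w)$ are analytic at $w=a^2$ and at $w=a^{-2}$ (i.e. have no poles there).
   Context: For $\varepsilon\in\{\alpha,\beta\}$ and $a\in(0,1]$ let $$\Phi_{\varepsilon,a}(z)=\frac{1}{(1-a^2z^{-1})^2}\begin{pmatrix}1&\frac{\varepsilon^2}{az}\\ \frac{1}{\varepsilon^2a}&1\end{pmatrix}\begin{pmatrix}1&\frac{\varepsilon^2a}{z}\\ \frac{a}{\varepsilon^2}&1\end{pmatrix}\begin{pmatrix}1&\frac{1}{az}\\ \frac1a&1\end{pmatrix}\begin{pmatrix}1&\frac az\\ a&1\end{pmatrix},$$ $\phi_{a,N}(z)=\Phi_{\alpha,a}(z)^{N/2}\Phi_{\beta,a}(z)^{N/2}$. Its eigenvalues $r_{a,1,N},r_{a,2,N}=\frac12\big(\operatorname{tr}\phi_{a,N}\pm\sqrt{(\operatorname{tr}\phi_{a,N})^2-4\det\phi_{a,N}}\big)$ are labeled so that $r_{a,1,N}$ has the pole at $w=a^2$; $F_{a,k,N}(w)=E_{a,N}(w)P_kE_{a,N}(w)^{-1}$ with $E_{a,N}$ an eigenvector matrix for this ordering, $P_1=\operatorname{diag}(1,0)$, $P_2=\operatorname{diag}(0,1)$, so $\phi_{a,N}=r_{a,1,N}F_{a,1,N}+r_{a,2,N}F_{a,2,N}$ and $F_{a,1,N}+F_{a,2,N}=I$. *)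

theory Defs
  imports "HOL-Analysis.Analysis"
begin

definition mat2 :: "complex \<Rightarrow> complex \<Rightarrow> complex \<Rightarrow> complex \<Rightarrow> complex^2^2" where
  "mat2 p q r s = (\<chi> i j. if i = 1 then (if j = 1 then p else q) else (if j = 1 then r else s))"

fun mpow :: "complex^2^2 \<Rightarrow> nat \<Rightarrow> complex^2^2" where
  "mpow M 0 = mat 1"
| "mpow M (Suc n) = M ** mpow M n"

definition cscale :: "complex \<Rightarrow> complex^2^2 \<Rightarrow> complex^2^2" where
  "cscale c M = (\<chi> i j. c * M $ i $ j)"

definition Phi :: "real \<Rightarrow> real \<Rightarrow> complex \<Rightarrow> complex^2^2" where
  "Phi e a z = (let e2 = complex_of_real (e^2); A = complex_of_real a in
     cscale (1 / (1 - A^2 / z)^2)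
       (mat2 1 (e2 / (A * z)) (1 / (e2 * A)) 1 **
        mat2 1 (e2 * A / z) (A / e2) 1 **
        mat2 1 (1 / (A * z)) (1 / A) 1 **
        mat2 1 (A / z) A 1))"

definition phi :: "real \<Rightarrow> real \<Rightarrow> real \<Rightarrow> nat \<Rightarrow> complex \<Rightarrow> complex^2^2" where
  "phi \<alpha> \<beta> a N z = mpow (Phi \<alpha> a z) (N div 2) ** mpow (Phi \<beta> a z) (N div 2)"

definition disc2 :: "complex^2^2 \<Rightarrow> complex" where
  "disc2 M = (trace M)^2 - 4 * det M"

text \<open>Spectral projection of a 2x2 matrix M with distinct eigenvalues r and
  r' = trace M - r onto the r-eigenspace along the r'-eigenspace:
  (M - r' I) / (r - r').  This equals E P_k E^{-1} for an eigenvector matrix E.\<close>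
definition spec_proj :: "complex^2^2 \<Rightarrow> complex \<Rightarrow> complex^2^2" where
  "spec_proj M r = cscale (1 / (r - (trace M - r))) (M - cscale (trace M - r) (mat 1))"

end

theory Submission
  imports Defs "HOL-Complex_Analysis.Complex_Analysis"
begin

text \<open>The matrix \<open>\<phi>(w)\<close> factors as \<open>c(w) P(w)\<close>, where the scalar \<open>c\<close> is a power of
  \<open>(1 - a\<^sup>2/w)\<^sup>-\<^sup>1\<close> and carries the pole at \<open>a\<^sup>2\<close>, while \<open>P\<close> is holomorphic for \<open>w \<noteq> 0\<close>
  and has positive entries at every positive real \<open>w\<^sub>0\<close>. Hence \<open>disc P(w\<^sub>0) > 0\<close>, so
  \<open>disc P\<close> has a holomorphic square root \<open>s\<close> near \<open>w\<^sub>0\<close>. As the punctured disc is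
  connected, every holomorphic eigenvalue branch of \<open>\<phi>\<close> on it is \<open>c (tr P \<plusminus> s)/2\<close> with
  one fixed sign, and the corresponding spectral projection is \<open>I/2 \<plusminus> (P - (tr P/2) I)/s\<close>:
  the scalar \<open>c\<close>, and with it the pole, has cancelled.\<close>

subsection \<open>Entrywise calculus for \<open>2\<times>2\<close> matrices\<close>

lemma cscale_nth [simp]: "cscale c M $ i $ j = c * M $ i $ j"
  by (simp add: cscale_def)

lemma mat2_nth [simp]:
  "mat2 p q r s $ 1 $ 1 = p" "mat2 p q r s $ 1 $ 2 = q"
  "mat2 p q r s $ 2 $ 1 = r" "mat2 p q r s $ 2 $ 2 = s"
  by (simp_all add: mat2_def)

lemma mat_1_nth: "(mat 1 :: complex^2^2) $ i $ j = (if i = j then 1 else 0)"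
  by (simp add: mat_def)

lemma trace_2x2: "trace (M :: complex^2^2) = M$1$1 + M$2$2"
  by (simp add: trace_def sum_2)

lemma matrix_mult_2x2_nth:
  fixes A B :: "complex^2^2"
  shows "(A ** B) $ i $ j = A$i$1 * B$1$j + A$i$2 * B$2$j"
  by (simp add: matrix_matrix_mult_def sum_2)

lemma disc2_2x2: "disc2 (M :: complex^2^2) = (M$1$1 + M$2$2)^2 - 4 * (M$1$1 * M$2$2 - M$1$2 * M$2$1)"
  by (simp add: disc2_def trace_2x2 det_2)

lemma cscale_matrix_mult: "cscale c A ** cscale d B = cscale (c * d) (A ** B)"
  by (simp add: vec_eq_iff matrix_mult_2x2_nth algebra_simps)

lemma mpow_cscale: "mpow (cscale c M) n = cscale (c ^ n) (mpow M n)"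
proof (induction n)
  case 0
  then show ?case by (simp add: vec_eq_iff mat_1_nth)
next
  case (Suc n)
  then show ?case by (simp add: cscale_matrix_mult)
qed

lemma trace_cscale: "trace (cscale c M) = c * trace M"
  by (simp add: trace_2x2 algebra_simps)

lemma disc2_cscale: "disc2 (cscale c M) = c^2 * disc2 M"
  by (simp add: disc2_2x2 algebra_simps power2_eq_square)

lemma eigenvalue_equation_disc2:
  "(2 * x - trace M)^2 = 4 * det (cscale x (mat 1) - M) + disc2 (M :: complex^2^2)"
  by (simp add: disc2_2x2 det_2 trace_2x2 mat_1_nth algebra_simps power2_eq_square)

lemma spec_proj_cscale_nth:
  assumes "2 * r - c * trace M = sg * c * s" "sg = 1 \<or> sg = -1" "c \<noteq> 0" "s \<noteq> 0"
  shows "spec_proj (cscale c M) r $ i $ j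
           = (if i = j then 1/2 else 0) + sg * (M$i$j - (if i = j then trace M / 2 else 0)) / s"
proof -
  have r: "r = (c * trace M + sg * c * s) / 2" using assms(1) by (simp add: field_simps)
  show ?thesis
    using assms(2-4) unfolding spec_proj_def trace_cscale r
    by (auto simp: mat_1_nth field_simps)
qed

subsection \<open>Holomorphic matrix-valued functions\<close>

definition matrix_holomorphic_on :: "(complex \<Rightarrow> complex^2^2) \<Rightarrow> complex set \<Rightarrow> bool" where
  "matrix_holomorphic_on F S \<longleftrightarrow> (\<forall>i j. (\<lambda>w. F w $ i $ j) holomorphic_on S)"

lemma matrix_holomorphic_on_mult:
  "matrix_holomorphic_on F S \<Longrightarrow> matrix_holomorphic_on G S \<Longrightarrow> matrix_holomorphic_on (\<lambda>w. F w ** G w) S"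
  unfolding matrix_holomorphic_on_def matrix_mult_2x2_nth by (auto intro!: holomorphic_intros)

lemma matrix_holomorphic_on_const: "matrix_holomorphic_on (\<lambda>w. M) S"
  unfolding matrix_holomorphic_on_def by simp

lemma matrix_holomorphic_on_mpow:
  "matrix_holomorphic_on F S \<Longrightarrow> matrix_holomorphic_on (\<lambda>w. mpow (F w) n) S"
  by (induction n) (simp_all add: matrix_holomorphic_on_const matrix_holomorphic_on_mult)

lemma matrix_holomorphic_on_mat2:
  assumes "p holomorphic_on S" "q holomorphic_on S" "r holomorphic_on S" "s holomorphic_on S"
  shows "matrix_holomorphic_on (\<lambda>w. mat2 (p w) (q w) (r w) (s w)) S"
  unfolding matrix_holomorphic_on_def
proof (intro allI)
  fix i j :: 2
  show "(\<lambda>w. mat2 (p w) (q w) (r w) (s w) $ i $ j) holomorphic_on S"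
    using exhaust_2[of i] exhaust_2[of j] assms by auto
qed

lemma matrix_holomorphic_on_trace:
  "matrix_holomorphic_on F S \<Longrightarrow> (\<lambda>w. trace (F w)) holomorphic_on S"
  unfolding matrix_holomorphic_on_def trace_2x2 by (auto intro!: holomorphic_intros)

lemma matrix_holomorphic_on_disc2:
  "matrix_holomorphic_on F S \<Longrightarrow> (\<lambda>w. disc2 (F w)) holomorphic_on S"
  unfolding matrix_holomorphic_on_def disc2_2x2 by (auto intro!: holomorphic_intros)

subsection \<open>Matrices with positive entries\<close>

definition positive_matrix :: "complex^2^2 \<Rightarrow> bool" where
  "positive_matrix M \<longleftrightarrow> (\<forall>i j. Im (M$i$j) = 0 \<and> Re (M$i$j) > 0)"

lemma positive_matrix_mult: "positive_matrix A \<Longrightarrow> positive_matrix B \<Longrightarrow> positive_matrix (A ** B)"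
  unfolding positive_matrix_def matrix_mult_2x2_nth by (auto intro!: add_pos_pos mult_pos_pos)

lemma positive_matrix_mpow:
  assumes "positive_matrix M" "n \<ge> 1"
  shows "positive_matrix (mpow M n)"
  using assms(2)
proof (induction n rule: dec_induct)
  case base
  then show ?case using assms(1) by (simp add: matrix_mul_rid)
next
  case (step n)
  then show ?case using assms(1) by (simp add: positive_matrix_mult)
qed

lemma positive_matrix_mat2:
  assumes "p > 0" "q > 0" "r > 0" "s > 0"
  shows "positive_matrix (mat2 (of_real p) (of_real q) (of_real r) (of_real s))"
  unfolding positive_matrix_def
proof (intro allI)
  fix i j :: 2
  show "Im (mat2 (of_real p) (of_real q) (of_real r) (of_real s) $ i $ j) = 0
        \<and> 0 < Re (mat2 (of_real p) (of_real q) (of_real r) (of_real s) $ i $ j)"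
    using exhaust_2[of i] exhaust_2[of j] assms by auto
qed

lemma positive_matrix_disc2_pos:
  assumes "positive_matrix M"
  shows "Re (disc2 M) > 0"
proof -
  have real: "M$i$j = of_real (Re (M$i$j))" for i j
    using assms unfolding positive_matrix_def by (simp add: complex_eq_iff)
  have pos: "Re (M$i$j) > 0" for i j
    using assms unfolding positive_matrix_def by auto
  have "disc2 M = of_real ((Re (M$1$1) - Re (M$2$2))^2 + 4 * Re (M$1$2) * Re (M$2$1))"
    by (subst disc2_2x2, subst (1 2 3 4 5 6) real) (simp add: power2_eq_square algebra_simps)
  moreover have "(Re (M$1$1) - Re (M$2$2))^2 + 4 * Re (M$1$2) * Re (M$2$1) > 0"
    using pos[of 1 2] pos[of 2 1] by (smt (verit) mult_pos_pos zero_le_power2)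
  ultimately show ?thesis by simp
qed

subsection \<open>Spectral projections of a scalar multiple of a holomorphic matrix\<close>

lemma holomorphic_sqrt_near_Re_pos:
  assumes D: "D holomorphic_on ball w0 d0" and "d0 > 0" and pos: "Re (D w0) > 0"
  obtains \<delta> s where "0 < \<delta>" "\<delta> \<le> d0" "s holomorphic_on ball w0 \<delta>"
    "\<And>w. w \<in> ball w0 \<delta> \<Longrightarrow> s w ^ 2 = D w \<and> s w \<noteq> 0"
proof -
  have "continuous_on (ball w0 d0) D"
    using D by (rule holomorphic_on_imp_continuous_on)
  then have "open (ball w0 d0 \<inter> D -` {z. Re z > 0})"
    by (rule continuous_open_preimage) (auto simp: open_halfspace_Re_gt)
  moreover have "w0 \<in> ball w0 d0 \<inter> D -` {z. Re z > 0}"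
    using \<open>d0 > 0\<close> pos by simp
  ultimately obtain d1 where d1: "d1 > 0" "ball w0 d1 \<subseteq> ball w0 d0 \<inter> D -` {z. Re z > 0}"
    using openE by blast
  define \<delta> where "\<delta> = min d0 d1"
  have sub: "ball w0 \<delta> \<subseteq> ball w0 d0" and Dpos: "\<And>w. w \<in> ball w0 \<delta> \<Longrightarrow> Re (D w) > 0"
    using d1 by (auto simp: \<delta>_def)
  have "(\<lambda>w. csqrt (D w)) holomorphic_on ball w0 \<delta>"
    by (rule holomorphic_on_csqrt'[OF holomorphic_on_subset[OF D sub]])
       (use Dpos in \<open>force simp: complex_nonpos_Reals_iff\<close>)
  moreover have "csqrt (D w) ^ 2 = D w \<and> csqrt (D w) \<noteq> 0" if "w \<in> ball w0 \<delta>" for w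
    using Dpos[OF that] by auto
  ultimately show ?thesis
    using that[of \<delta> "\<lambda>w. csqrt (D w)"] d1 \<open>d0 > 0\<close> by (simp add: \<delta>_def)
qed

lemma continuous_square_eq_1_constant:
  assumes "connected U" "U \<noteq> {}" "continuous_on U q" "\<And>w. w \<in> U \<Longrightarrow> q w ^ 2 = (1 :: complex)"
  obtains sg where "sg = 1 \<or> sg = -1" "\<And>w. w \<in> U \<Longrightarrow> q w = sg"
proof -
  have "finite (q ` U)"
    by (rule finite_subset[of _ "{1, -1}"]) (use assms(4) in \<open>auto simp: power2_eq_1_iff\<close>)
  then have "q constant_on U"
    using assms(1,3) continuous_finite_range_constant by blast
  then obtain sg where "\<And>w. w \<in> U \<Longrightarrow> q w = sg"
    by (auto simp: constant_on_def)
  moreover obtain w where "w \<in> U" using assms(2) by blast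
  ultimately show ?thesis
    using that assms(4) by (metis power2_eq_1_iff)
qed

lemma eigenvalue_branch_sign_constant:
  assumes U: "connected U" "U \<noteq> {}"
    and holo: "r holomorphic_on U" "c holomorphic_on U" "(\<lambda>w. trace (P w)) holomorphic_on U"
      "s holomorphic_on U"
    and nz: "\<And>w. w \<in> U \<Longrightarrow> c w \<noteq> 0 \<and> s w \<noteq> 0"
    and s2: "\<And>w. w \<in> U \<Longrightarrow> s w ^ 2 = disc2 (P w)"
    and eig: "\<And>w. w \<in> U \<Longrightarrow> det (cscale (r w) (mat 1) - cscale (c w) (P w)) = 0"
  obtains sg where "sg = 1 \<or> sg = -1"
    "\<And>w. w \<in> U \<Longrightarrow> 2 * r w - c w * trace (P w) = sg * c w * s w"
proof -
  define q where "q w = (2 * r w - c w * trace (P w)) / (c w * s w)" for w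
  have "continuous_on U q"
    unfolding q_def using holo nz
    by (intro holomorphic_on_imp_continuous_on) (auto intro!: holomorphic_intros)
  moreover have "q w ^ 2 = 1" if w: "w \<in> U" for w
  proof -
    have "(2 * r w - c w * trace (P w))^2 = (c w * s w)^2"
      using eigenvalue_equation_disc2[of "r w" "cscale (c w) (P w)"] eig[OF w] s2[OF w]
      by (simp add: trace_cscale disc2_cscale power_mult_distrib)
    then show ?thesis using nz[OF w] by (simp add: q_def power_divide)
  qed
  ultimately obtain sg where "sg = 1 \<or> sg = -1" "\<And>w. w \<in> U \<Longrightarrow> q w = sg"
    using continuous_square_eq_1_constant[OF U] by metis
  then show ?thesis
    using that nz by (auto simp: q_def field_simps)
qed

definition spectral_splitting_at :: "(complex \<Rightarrow> complex^2^2) \<Rightarrow> complex \<Rightarrow> bool" where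
  "spectral_splitting_at F w0 \<longleftrightarrow> (\<exists>\<delta>>0.
      (\<forall>w \<in> ball w0 \<delta> - {w0}. disc2 (F w) \<noteq> 0)
    \<and> (\<exists>r. r holomorphic_on (ball w0 \<delta> - {w0}) \<and>
          (\<forall>w \<in> ball w0 \<delta> - {w0}. det (cscale (r w) (mat 1) - F w) = 0))
    \<and> (\<forall>r. r holomorphic_on (ball w0 \<delta> - {w0}) \<and>
          (\<forall>w \<in> ball w0 \<delta> - {w0}. det (cscale (r w) (mat 1) - F w) = 0)
        \<longrightarrow> (\<forall>k \<in> {1::nat, 2}. \<forall>i j. \<exists>g. g holomorphic_on ball w0 \<delta> \<and>
              (\<forall>w \<in> ball w0 \<delta> - {w0}.
                 g w = spec_proj (F w) (if k = 1 then r w else trace (F w) - r w) $ i $ j))))"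

lemma eigenvalue_cscale_sqrt_disc2:
  assumes "s ^ 2 = disc2 P"
  shows "det (cscale (c * (trace P + s) / 2) (mat 1) - cscale c P) = 0"
proof -
  have "2 * (c * (trace P + s) / 2) - trace (cscale c P) = c * s"
    by (simp add: trace_cscale algebra_simps)
  then have "(2 * (c * (trace P + s) / 2) - trace (cscale c P))^2 = disc2 (cscale c P)"
    using assms by (simp add: disc2_cscale power_mult_distrib)
  then show ?thesis
    using eigenvalue_equation_disc2[of "c * (trace P + s) / 2" "cscale c P"] by simp
qed

lemma spec_proj_branch_holomorphic_extension:
  assumes P: "matrix_holomorphic_on P S" and s: "s holomorphic_on S" "\<And>w. w \<in> S \<Longrightarrow> s w \<noteq> 0"
    and "U \<subseteq> S" and c: "\<And>w. w \<in> U \<Longrightarrow> c w \<noteq> 0" and sg: "sg = 1 \<or> sg = -1"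
    and branch: "\<And>w. w \<in> U \<Longrightarrow> 2 * r w - c w * trace (P w) = sg * c w * s w"
    and k: "k \<in> {1::nat, 2}"
  shows "\<exists>g. g holomorphic_on S \<and> (\<forall>w \<in> U. g w = spec_proj (cscale (c w) (P w))
           (if k = 1 then r w else trace (cscale (c w) (P w)) - r w) $ i $ j)"
proof (intro exI conjI ballI)
  define sk where "sk = (if k = 1 then sg else - sg)"
  show "(\<lambda>w. (if i = j then 1/2 else 0) + sk * (P w $ i $ j - (if i = j then trace (P w) / 2 else 0)) / s w)
          holomorphic_on S"
    using matrix_holomorphic_on_trace[OF P] s P[unfolded matrix_holomorphic_on_def]
    by (auto intro!: holomorphic_intros)
  fix w assume w: "w \<in> U"
  have "2 * (if k = 1 then r w else trace (cscale (c w) (P w)) - r w) - c w * trace (P w) = sk * c w * s w"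
    using branch[OF w] k by (auto simp: sk_def trace_cscale algebra_simps)
  moreover have "sk = 1 \<or> sk = -1" using sg by (auto simp: sk_def)
  ultimately show "(if i = j then 1/2 else 0) + sk * (P w $ i $ j - (if i = j then trace (P w) / 2 else 0)) / s w
      = spec_proj (cscale (c w) (P w)) (if k = 1 then r w else trace (cscale (c w) (P w)) - r w) $ i $ j"
    using c[OF w] s(2) w \<open>U \<subseteq> S\<close> by (subst spec_proj_cscale_nth) auto
qed

lemma spectral_splitting_at_cscale:
  assumes "d0 > 0" and P: "matrix_holomorphic_on P (ball w0 d0)"
    and c: "c holomorphic_on (ball w0 d0 - {w0})" "\<And>w. w \<in> ball w0 d0 - {w0} \<Longrightarrow> c w \<noteq> 0"
    and pos: "Re (disc2 (P w0)) > 0"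
  shows "spectral_splitting_at (\<lambda>w. cscale (c w) (P w)) w0"
proof -
  obtain \<delta> s where \<delta>: "0 < \<delta>" "\<delta> \<le> d0" and s: "s holomorphic_on ball w0 \<delta>"
    and s2: "\<And>w. w \<in> ball w0 \<delta> \<Longrightarrow> s w ^ 2 = disc2 (P w) \<and> s w \<noteq> 0"
    using holomorphic_sqrt_near_Re_pos[OF matrix_holomorphic_on_disc2[OF P] \<open>d0 > 0\<close> pos] by blast
  define U where "U = ball w0 \<delta> - {w0}"
  have sub: "ball w0 \<delta> \<subseteq> ball w0 d0" "U \<subseteq> ball w0 d0 - {w0}" "U \<subseteq> ball w0 \<delta>"
    using \<delta> by (auto simp: U_def)
  have "w0 + of_real (\<delta> / 2) \<in> U"
    using \<delta> by (auto simp: U_def dist_norm)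
  then have U: "connected U" "U \<noteq> {}"
    by (auto simp: U_def connected_punctured_ball)
  have Pb: "matrix_holomorphic_on P (ball w0 \<delta>)"
    using P sub(1) by (auto simp: matrix_holomorphic_on_def intro: holomorphic_on_subset)
  have holoU: "(\<lambda>w. trace (P w)) holomorphic_on U" "s holomorphic_on U" "c holomorphic_on U"
    using holomorphic_on_subset[OF matrix_holomorphic_on_trace[OF Pb]] holomorphic_on_subset[OF s]
      holomorphic_on_subset[OF c(1)] sub
    by blast+
  have nz: "c w \<noteq> 0 \<and> s w \<noteq> 0" if "w \<in> U" for w
    using c(2) s2 sub that by blast
  have "\<forall>w \<in> U. disc2 (cscale (c w) (P w)) \<noteq> 0"
    using s2 sub nz by (metis disc2_cscale mult_eq_0_iff power_not_zero subsetD)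
  moreover have "(\<lambda>w. c w * (trace (P w) + s w) / 2) holomorphic_on U"
    using holoU by (auto intro!: holomorphic_intros)
  moreover have "\<forall>w \<in> U. det (cscale (c w * (trace (P w) + s w) / 2) (mat 1) - cscale (c w) (P w)) = 0"
    using s2 sub(3) by (blast intro: eigenvalue_cscale_sqrt_disc2)
  moreover have "\<exists>g. g holomorphic_on ball w0 \<delta> \<and> (\<forall>w \<in> U. g w = spec_proj (cscale (c w) (P w))
           (if k = 1 then r w else trace (cscale (c w) (P w)) - r w) $ i $ j)"
    if r: "r holomorphic_on U" "\<forall>w \<in> U. det (cscale (r w) (mat 1) - cscale (c w) (P w)) = 0"
      and k: "k \<in> {1::nat, 2}" for r k i j
  proof -
    obtain sg where "sg = 1 \<or> sg = -1"
      and "\<And>w. w \<in> U \<Longrightarrow> 2 * r w - c w * trace (P w) = sg * c w * s w"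
      using eigenvalue_branch_sign_constant[OF U r(1) holoU(3,1,2) nz] s2 sub r(2) by blast
    then show ?thesis
      using spec_proj_branch_holomorphic_extension[OF Pb s _ sub(3) _ _ _ k] s2 nz by blast
  qed
  ultimately show ?thesis
    using \<delta>(1) unfolding spectral_splitting_at_def U_def by blast
qed

subsection \<open>The transfer matrix \<open>\<phi>\<^sub>a\<^sub>,\<^sub>N\<close>\<close>

definition Phi_scalar :: "real \<Rightarrow> complex \<Rightarrow> complex" where
  "Phi_scalar a z = 1 / (1 - (complex_of_real a)^2 / z)^2"

definition Phi_matrix :: "real \<Rightarrow> real \<Rightarrow> complex \<Rightarrow> complex^2^2" where
  "Phi_matrix e a z = (let e2 = complex_of_real (e^2); A = complex_of_real a in
        mat2 1 (e2 / (A * z)) (1 / (e2 * A)) 1 **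
        mat2 1 (e2 * A / z) (A / e2) 1 **
        mat2 1 (1 / (A * z)) (1 / A) 1 **
        mat2 1 (A / z) A 1)"

definition phi_matrix :: "real \<Rightarrow> real \<Rightarrow> real \<Rightarrow> nat \<Rightarrow> complex \<Rightarrow> complex^2^2" where
  "phi_matrix \<alpha> \<beta> a N z = mpow (Phi_matrix \<alpha> a z) (N div 2) ** mpow (Phi_matrix \<beta> a z) (N div 2)"

lemma Phi_eq_cscale: "Phi e a z = cscale (Phi_scalar a z) (Phi_matrix e a z)"
  by (simp add: Phi_def Phi_matrix_def Phi_scalar_def Let_def)

lemma phi_eq_cscale:
  "phi \<alpha> \<beta> a N z = cscale (Phi_scalar a z ^ (N div 2) * Phi_scalar a z ^ (N div 2)) (phi_matrix \<alpha> \<beta> a N z)"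
  by (simp add: phi_def phi_matrix_def Phi_eq_cscale mpow_cscale cscale_matrix_mult)

lemma Phi_scalar_holomorphic:
  assumes "0 \<notin> S" "complex_of_real (a^2) \<notin> S"
  shows "Phi_scalar a holomorphic_on S" "\<And>w. w \<in> S \<Longrightarrow> Phi_scalar a w \<noteq> 0"
proof -
  have nz: "w \<noteq> 0" "w \<noteq> complex_of_real a ^ 2" if "w \<in> S" for w
    using assms that by auto
  then have denom_nz: "(1 - (complex_of_real a)^2 / w)^2 \<noteq> 0" if "w \<in> S" for w
    using that by (simp add: field_simps)
  then show "Phi_scalar a holomorphic_on S"
    unfolding Phi_scalar_def using nz by (intro holomorphic_intros) auto
  show "Phi_scalar a w \<noteq> 0" if "w \<in> S" for w
    using denom_nz[OF that] by (simp add: Phi_scalar_def)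
qed

lemma Phi_matrix_holomorphic:
  assumes "0 \<notin> S" "a \<noteq> 0" "e \<noteq> 0"
  shows "matrix_holomorphic_on (Phi_matrix e a) S"
  unfolding Phi_matrix_def Let_def
  by (intro matrix_holomorphic_on_mult matrix_holomorphic_on_mat2)
     (use assms in \<open>auto intro!: holomorphic_intros\<close>)

lemma Phi_matrix_positive:
  assumes "x > 0" "a > 0" "e > 0"
  shows "positive_matrix (Phi_matrix e a (complex_of_real x))"
proof -
  have "Phi_matrix e a (complex_of_real x) =
        mat2 1 (of_real (e^2 / (a * x))) (of_real (1 / (e^2 * a))) 1 **
        mat2 1 (of_real (e^2 * a / x)) (of_real (a / e^2)) 1 **
        mat2 1 (of_real (1 / (a * x))) (of_real (1 / a)) 1 **
        mat2 1 (of_real (a / x)) (of_real a) 1"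
    by (simp add: Phi_matrix_def Let_def)
  then show ?thesis
    using assms by (metis positive_matrix_mult positive_matrix_mat2 of_real_1 zero_less_one
        divide_pos_pos mult_pos_pos zero_less_power)
qed

lemma punctured_ball_avoiding:
  fixes w0 p :: "'a :: real_normed_vector"
  assumes "w0 \<noteq> 0"
  obtains d where "d > 0" "0 \<notin> ball w0 d" "p \<notin> ball w0 d - {w0}"
proof -
  define d where "d = (if p = w0 then norm w0 else min (norm w0) (dist w0 p))"
  have "d > 0" "0 \<notin> ball w0 d" "p \<notin> ball w0 d - {w0}"
    using assms by (auto simp: d_def dist_norm)
  then show ?thesis by (rule that)
qed

lemma spectral_splitting_at_phi:
  assumes "x0 > 0" "\<alpha> > 0" "\<beta> > 0" "a > 0" "even N" "N > 0"
  shows "spectral_splitting_at (phi \<alpha> \<beta> a N) (complex_of_real x0)"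
proof -
  define w0 where "w0 = complex_of_real x0"
  obtain d0 where d0: "d0 > 0" "0 \<notin> ball w0 d0" "complex_of_real (a^2) \<notin> ball w0 d0 - {w0}"
    using punctured_ball_avoiding[of w0] \<open>x0 > 0\<close> unfolding w0_def by auto
  have "N div 2 \<ge> 1" using assms(5,6) by (auto elim!: evenE)
  then have "positive_matrix (phi_matrix \<alpha> \<beta> a N w0)"
    unfolding phi_matrix_def w0_def using assms
    by (intro positive_matrix_mult positive_matrix_mpow Phi_matrix_positive) auto
  moreover have "matrix_holomorphic_on (phi_matrix \<alpha> \<beta> a N) (ball w0 d0)"
    unfolding phi_matrix_def using d0(2) assms
    by (intro matrix_holomorphic_on_mult matrix_holomorphic_on_mpow Phi_matrix_holomorphic) auto
  moreover note Phi_scalar_holomorphic[of "ball w0 d0 - {w0}" a]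
  ultimately have "spectral_splitting_at
      (\<lambda>w. cscale (Phi_scalar a w ^ (N div 2) * Phi_scalar a w ^ (N div 2)) (phi_matrix \<alpha> \<beta> a N w)) w0"
    using d0 by (intro spectral_splitting_at_cscale positive_matrix_disc2_pos) (auto intro!: holomorphic_intros)
  then show ?thesis
    unfolding w0_def phi_eq_cscale[abs_def] .
qed

theorem lemma5p2:
  fixes \<alpha> \<beta> a :: real and N :: nat
  assumes "0 < \<alpha>" "\<alpha> < 1" "0 < \<beta>" "\<beta> < 1" "0 < a" "a \<le> 1"
    and "even N" "N > 0"
  shows "\<forall>w0 \<in> {complex_of_real (a^2), complex_of_real (1 / a^2)}.
    \<exists>\<delta>>0.
      (\<forall>w \<in> ball w0 \<delta> - {w0}. disc2 (phi \<alpha> \<beta> a N w) \<noteq> 0)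
    \<and> (\<exists>r. r holomorphic_on (ball w0 \<delta> - {w0}) \<and>
          (\<forall>w \<in> ball w0 \<delta> - {w0}. det (cscale (r w) (mat 1) - phi \<alpha> \<beta> a N w) = 0))
    \<and> (\<forall>r. r holomorphic_on (ball w0 \<delta> - {w0}) \<and>
          (\<forall>w \<in> ball w0 \<delta> - {w0}. det (cscale (r w) (mat 1) - phi \<alpha> \<beta> a N w) = 0)
        \<longrightarrow> (\<forall>k \<in> {1::nat, 2}. \<forall>i j. \<exists>g. g holomorphic_on ball w0 \<delta> \<and>
              (\<forall>w \<in> ball w0 \<delta> - {w0}.
                 g w = spec_proj (phi \<alpha> \<beta> a N w)
                         (if k = 1 then r w else trace (phi \<alpha> \<beta> a N w) - r w) $ i $ j)))"
proof -
  have "spectral_splitting_at (phi \<alpha> \<beta> a N) w0"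
    if "w0 \<in> {complex_of_real (a^2), complex_of_real (1 / a^2)}" for w0
    using that assms spectral_splitting_at_phi[of "a^2" \<alpha> \<beta> a N] spectral_splitting_at_phi[of "1 / a^2" \<alpha> \<beta> a N]
    by force
  then show ?thesis
    unfolding spectral_splitting_at_def by blast
qed

end
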